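(* Every topological space with the countable chain condition (CCC) is selectively $2$-star-ccc.
   Context: No separation axioms are assumed. A space has the CCC if every pairwise disjoint family of open sets is countable. For $B\subseteq X$ and a family $\mathcal{U}$ of subsets of $X$: $\operatorname{st}^1(B,\mathcal{U})=\bigcup\{U\in\mathcal{U}:U\cap B\neq\emptyset\}$ and $\operatorname{st}^{2}(B,\mathcal{U})=\bigcup\{U\in\mathcal{U}:U\cap\operatorname{st}^1(B,\mathcal{U})\neq\emptyset\}$. A space $X$ is selectively $2$-star-ccc if for every open cover $\mathcal{U}$ of $X$ and every sequence $(\mathcal{A}_n:n\in\omega)$ of maximal pairwise disjoint families of open subsets of $X$, there is a sequence $(A_n\in\mathcal{A}_n:n\in\omega)$ with $\operatorname{st}^2(\bigcup_{n\in\omega}A_n,\mathcal{U})=X$. *)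

theory Defs
  imports "HOL-Analysis.Analysis"
begin

definition ccc :: "'a topology \<Rightarrow> bool" where
  "ccc X \<longleftrightarrow> (\<forall>\<A>. (\<forall>A\<in>\<A>. openin X A) \<and> pairwise disjnt \<A> \<longrightarrow> countable \<A>)"

definition cellular_family :: "'a topology \<Rightarrow> 'a set set \<Rightarrow> bool" where
  "cellular_family X \<A> \<longleftrightarrow> (\<forall>A\<in>\<A>. openin X A \<and> A \<noteq> {}) \<and> pairwise disjnt \<A>"

definition maximal_cellular_family :: "'a topology \<Rightarrow> 'a set set \<Rightarrow> bool" where
  "maximal_cellular_family X \<A> \<longleftrightarrow>
     cellular_family X \<A> \<and> (\<forall>\<B>. cellular_family X \<B> \<and> \<A> \<subseteq> \<B> \<longrightarrow> \<B> = \<A>)"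

definition st1 :: "'a set \<Rightarrow> 'a set set \<Rightarrow> 'a set" where
  "st1 B \<U> = \<Union>{U \<in> \<U>. U \<inter> B \<noteq> {}}"

definition st2 :: "'a set \<Rightarrow> 'a set set \<Rightarrow> 'a set" where
  "st2 B \<U> = \<Union>{U \<in> \<U>. U \<inter> st1 B \<U> \<noteq> {}}"

definition selectively_2_star_ccc :: "'a topology \<Rightarrow> bool" where
  "selectively_2_star_ccc X \<longleftrightarrow>
     (\<forall>\<U> \<A>. (\<forall>U\<in>\<U>. openin X U) \<and> \<Union>\<U> = topspace X
        \<and> (\<forall>n::nat. maximal_cellular_family X (\<A> n))
        \<longrightarrow> (\<exists>A. (\<forall>n. A n \<in> \<A> n) \<and> st2 (\<Union>n. A n) \<U> = topspace X))"

end

theory Submission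
  imports Defs
begin

text \<open>Take a maximal pairwise disjoint family \<open>\<M>\<close> of nonempty open sets, each contained in a
member of the cover \<open>\<U>\<close>. By the CCC it is countable, say \<open>\<M> = {W\<^sub>0, W\<^sub>1, \<dots>}\<close>, and each
maximal cellular family \<open>\<A>\<^sub>k\<close> has a member \<open>A\<^sub>k\<close> meeting \<open>W\<^sub>k\<close>. Every \<open>U \<in> \<U>\<close> containing a
point \<open>x\<close> meets some \<open>W\<^sub>k \<subseteq> U'\<close> with \<open>U' \<in> \<U>\<close>; as \<open>U'\<close> meets \<open>A\<^sub>k\<close>, it lies in the first star
of \<open>\<Union>\<^sub>n A\<^sub>n\<close>, so \<open>x\<close> lies in the second star.\<close>

lemma maximal_pairwise_disjnt_family_exists:
  fixes P :: "'a set \<Rightarrow> bool"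
  obtains \<M> where "\<forall>W\<in>\<M>. P W" "pairwise disjnt \<M>"
    "\<And>V. P V \<Longrightarrow> V \<noteq> {} \<Longrightarrow> \<exists>W\<in>\<M>. W \<inter> V \<noteq> {}"
proof -
  define \<F> where "\<F> = {\<M>. (\<forall>W\<in>\<M>. P W) \<and> pairwise disjnt \<M>}"
  have "\<Union>\<C> \<in> \<F>" if "\<C> \<in> chains \<F>" for \<C>
    using that chainsD2[OF that] pairwise_chain_Union[of \<C> disjnt]
    unfolding \<F>_def chains_def by blast
  then obtain \<M> where "\<M> \<in> \<F>" and max: "\<And>\<N>. \<N> \<in> \<F> \<Longrightarrow> \<M> \<subseteq> \<N> \<Longrightarrow> \<N> = \<M>"
    using Zorn_Lemma[of \<F>] by blast
  then have P: "\<forall>W\<in>\<M>. P W" and disj: "pairwise disjnt \<M>"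
    unfolding \<F>_def by auto
  have meets: "\<exists>W\<in>\<M>. W \<inter> V \<noteq> {}" if "P V" "V \<noteq> {}" for V
  proof (rule ccontr)
    assume disjoint: "\<not> (\<exists>W\<in>\<M>. W \<inter> V \<noteq> {})"
    then have "pairwise disjnt (insert V \<M>)"
      using disj by (auto simp: pairwise_insert disjnt_def)
    then have "insert V \<M> \<in> \<F>"
      using P \<open>P V\<close> unfolding \<F>_def by blast
    moreover have "V \<notin> \<M>"
      using disjoint \<open>V \<noteq> {}\<close> by blast
    ultimately show False
      using max[of "insert V \<M>"] by blast
  qed
  from P disj meets show thesis
    by (rule that)
qed

lemma maximal_cellular_family_meets_open:
  assumes "maximal_cellular_family X \<A>" "openin X V" "V \<noteq> {}"
  shows "\<exists>A\<in>\<A>. A \<inter> V \<noteq> {}"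
proof (rule ccontr)
  assume disjoint: "\<not> (\<exists>A\<in>\<A>. A \<inter> V \<noteq> {})"
  have "cellular_family X (insert V \<A>)"
    using assms disjoint unfolding maximal_cellular_family_def cellular_family_def
      pairwise_insert disjnt_def by blast
  moreover have "V \<notin> \<A>"
    using disjoint assms(3) by blast
  ultimately show False
    using assms(1) unfolding maximal_cellular_family_def by blast
qed

lemma selection_meeting_countable_family:
  fixes \<A> :: "nat \<Rightarrow> 'a set set"
  assumes "countable \<W>" "\<W> \<noteq> {}"
    and "\<And>W. W \<in> \<W> \<Longrightarrow> openin X W \<and> W \<noteq> {}"
    and "\<And>n. maximal_cellular_family X (\<A> n)"
  obtains A where "\<And>n. A n \<in> \<A> n" "\<And>W. W \<in> \<W> \<Longrightarrow> W \<inter> (\<Union>n. A n) \<noteq> {}"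
proof -
  define w where "w = from_nat_into \<W>"
  have "\<exists>A\<in>\<A> n. A \<inter> w n \<noteq> {}" for n
    using maximal_cellular_family_meets_open[OF assms(4)] assms(2,3)
    unfolding w_def by (meson from_nat_into)
  then obtain A where A: "\<And>n. A n \<in> \<A> n \<and> A n \<inter> w n \<noteq> {}"
    by metis
  have "W \<inter> (\<Union>n. A n) \<noteq> {}" if "W \<in> \<W>" for W
    using A from_nat_into_surj[OF assms(1) that] unfolding w_def by blast
  then show thesis
    using that A by blast
qed

lemma st2_eq_Union:
  assumes "\<And>W. W \<in> \<W> \<Longrightarrow> \<exists>U\<in>\<U>. W \<subseteq> U"
    and "\<And>W. W \<in> \<W> \<Longrightarrow> W \<inter> B \<noteq> {}"
    and "\<And>U. U \<in> \<U> \<Longrightarrow> U \<noteq> {} \<Longrightarrow> \<exists>W\<in>\<W>. W \<inter> U \<noteq> {}"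
  shows "st2 B \<U> = \<Union>\<U>"
proof
  show "st2 B \<U> \<subseteq> \<Union>\<U>"
    unfolding st2_def by blast
  show "\<Union>\<U> \<subseteq> st2 B \<U>"
  proof
    fix x assume "x \<in> \<Union>\<U>"
    then obtain U where U: "U \<in> \<U>" "x \<in> U" by blast
    then obtain W where W: "W \<in> \<W>" "W \<inter> U \<noteq> {}"
      using assms(3) by blast
    then obtain U' where "U' \<in> \<U>" "W \<subseteq> U'"
      using assms(1) by blast
    then have "W \<subseteq> st1 B \<U>"
      using assms(2)[OF W(1)] unfolding st1_def by blast
    then show "x \<in> st2 B \<U>"
      using U W unfolding st2_def by blast
  qed
qed

lemma ccc_countable_refinement_meeting_cover:
  assumes "ccc X" "topspace X \<noteq> {}" "\<forall>U\<in>\<U>. openin X U" "\<Union>\<U> = topspace X"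
  obtains \<W> where "countable \<W>" "\<W> \<noteq> {}" "\<And>W. W \<in> \<W> \<Longrightarrow> openin X W \<and> W \<noteq> {}"
    "\<And>W. W \<in> \<W> \<Longrightarrow> \<exists>U\<in>\<U>. W \<subseteq> U"
    "\<And>U. U \<in> \<U> \<Longrightarrow> U \<noteq> {} \<Longrightarrow> \<exists>W\<in>\<W>. W \<inter> U \<noteq> {}"
proof -
  define small where "small W \<longleftrightarrow> openin X W \<and> W \<noteq> {} \<and> (\<exists>U\<in>\<U>. W \<subseteq> U)" for W
  obtain \<W> where small: "\<forall>W\<in>\<W>. small W" and disj: "pairwise disjnt \<W>"
    and meets: "\<And>V. small V \<Longrightarrow> V \<noteq> {} \<Longrightarrow> \<exists>W\<in>\<W>. W \<inter> V \<noteq> {}"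
    by (erule maximal_pairwise_disjnt_family_exists)
  have open_nonempty: "\<And>W. W \<in> \<W> \<Longrightarrow> openin X W \<and> W \<noteq> {}"
    using small unfolding small_def by blast
  then have "countable \<W>"
    using assms(1) disj unfolding ccc_def by blast
  moreover have meets_cover: "\<exists>W\<in>\<W>. W \<inter> U \<noteq> {}" if "U \<in> \<U>" "U \<noteq> {}" for U
    using meets[of U] assms(3) that unfolding small_def by blast
  moreover have "\<W> \<noteq> {}"
    using meets_cover assms(2,4) by blast
  moreover have "\<And>W. W \<in> \<W> \<Longrightarrow> \<exists>U\<in>\<U>. W \<subseteq> U"
    using small unfolding small_def by blast
  ultimately show thesis
    using that open_nonempty by blast
qed

theorem corollary4:
  fixes X :: "'a topology"
  assumes "topspace X \<noteq> {}"
    and "ccc X"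
  shows "selectively_2_star_ccc X"
  unfolding selectively_2_star_ccc_def
proof (intro allI impI)
  fix \<U> :: "'a set set" and \<A> :: "nat \<Rightarrow> 'a set set"
  assume "(\<forall>U\<in>\<U>. openin X U) \<and> \<Union>\<U> = topspace X \<and> (\<forall>n. maximal_cellular_family X (\<A> n))"
  then have open_cover: "\<forall>U\<in>\<U>. openin X U" and cover: "\<Union>\<U> = topspace X"
    and maximal: "\<And>n. maximal_cellular_family X (\<A> n)" by auto
  obtain \<W> where countable: "countable \<W>" and nonempty: "\<W> \<noteq> {}"
    and open_nonempty: "\<And>W. W \<in> \<W> \<Longrightarrow> openin X W \<and> W \<noteq> {}"
    and refines: "\<And>W. W \<in> \<W> \<Longrightarrow> \<exists>U\<in>\<U>. W \<subseteq> U"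
    and meets: "\<And>U. U \<in> \<U> \<Longrightarrow> U \<noteq> {} \<Longrightarrow> \<exists>W\<in>\<W>. W \<inter> U \<noteq> {}"
    using ccc_countable_refinement_meeting_cover[OF assms(2,1) open_cover cover] by blast
  obtain A where A: "\<And>n. A n \<in> \<A> n" "\<And>W. W \<in> \<W> \<Longrightarrow> W \<inter> (\<Union>n. A n) \<noteq> {}"
    using selection_meeting_countable_family[of \<W> X \<A>, OF countable nonempty open_nonempty maximal]
    by blast
  have "st2 (\<Union>n. A n) \<U> = topspace X"
    using st2_eq_Union[OF refines A(2) meets] cover by simp
  with A(1) show "\<exists>A. (\<forall>n. A n \<in> \<A> n) \<and> st2 (\<Union>n. A n) \<U> = topspace X"
    by blast
qed

end
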